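(* Fix $p\in(0,1)$, $q=1-p$, and for $0\le k\le n$ let $w_{n,k}:=\frac{(n)_k}{n^k}q^{k(k+1)/2}$ with $(n)_k=n(n-1)\cdots(n-k+1)$ and $w_{n,0}=1$. Let $\nu_n$ be the stationary law of the careless count chain. There exist constants $0<c_p<C_p<\infty$ and an integer $M_p<\infty$ such that for all sufficiently large $n$ and all $M_p\le k\le n$, $c_pw_{n,k}\le\nu_n(k)\le C_pw_{n,k}$. In particular $\nu_n(n)=\Theta_p\!\left(\frac{n!}{n^n}q^{n(n+1)/2}\right)$.
   Context: The careless count chain $(K_t)$ on $\{0,\dots,n\}$: given $K_t=k$, with probability $k/n$ one has $K_{t+1}\sim\mathrm{Bin}(k,q)$, and with probability $(n-k)/n$ one has $K_{t+1}\sim\mathrm{Bin}(k+1,q)$. It is irreducible and aperiodic with unique stationary law $\nu_n$. $\Theta_p(\cdot)$ means bounded above and below by positive constants depending only on $p$. *)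

theory Defs
  imports Complex_Main
begin

definition binom_pmf :: "nat \<Rightarrow> real \<Rightarrow> nat \<Rightarrow> real" where
  "binom_pmf m q j = real (m choose j) * q ^ j * (1 - q) ^ (m - j)"

definition careless_P :: "real \<Rightarrow> nat \<Rightarrow> nat \<Rightarrow> nat \<Rightarrow> real" where
  "careless_P p n k j =
     (real k / real n) * binom_pmf k (1 - p) j
     + (real (n - k) / real n) * binom_pmf (k + 1) (1 - p) j"

definition careless_stationary :: "real \<Rightarrow> nat \<Rightarrow> (nat \<Rightarrow> real) \<Rightarrow> bool" where
  "careless_stationary p n \<nu> \<longleftrightarrow>
     (\<forall>j. 0 \<le> \<nu> j) \<and> (\<forall>j>n. \<nu> j = 0) \<and> (\<Sum>j\<le>n. \<nu> j) = 1 \<and>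
     (\<forall>j\<le>n. \<nu> j = (\<Sum>k\<le>n. \<nu> k * careless_P p n k j))"

text \<open>The (unique) stationary law \<nu>_n.\<close>
definition careless_nu :: "real \<Rightarrow> nat \<Rightarrow> nat \<Rightarrow> real" where
  "careless_nu p n = (THE \<nu>. careless_stationary p n \<nu>)"

definition careless_w :: "real \<Rightarrow> nat \<Rightarrow> nat \<Rightarrow> real" where
  "careless_w p n k = (\<Prod>i<k. real (n - i)) / real n ^ k * (1 - p) ^ (k * (k + 1) div 2)"

end

theory Submission
  imports Defs "HOL-Analysis.Infinite_Products"
begin

(*
  The chain moves up by at most one step, so balance at every state is equivalent to balance
  of the probability flow across each cut between j and j + 1:
    nu(j) P(j, j+1) = sum over k > j of nu(k) P(k, [0, j]).
  Solving these equations downwards from nu(n) gives existence and uniqueness of nu_n.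

  Since P(k, k+1) = ((n - k) / n) q^(k+1), the weight w_{n,k} is the product of the upward
  probabilities P(i, i+1) for i < k. Balance at k + 1 gives nu(k+1) >= nu(k) P(k, k+1), hence
  nu(k) >= nu(0) w_{n,k}. The cut equation gives nu(k+1) P(k+1, [0, k]) <= nu(k) P(k, k+1), where
  P(k+1, [0, k]) >= 1 - (k+3) q^(k+1); these defects are summable, so their product over k >= M
  is at least 1/2 for a suitable M, and nu(k) <= C w_{n,k} for M <= k <= n. This upper bound
  leaves mass at most 1/2 above a fixed level L, and every state up to L jumps to 0 with
  probability at least p^(L+1), so nu(0) is bounded below uniformly in n.
*)

lemma eq_on_atMost_iff_partial_sums_eq:
  fixes f g :: "nat \<Rightarrow> 'a::ab_group_add"
  shows "(\<forall>j\<le>n. f j = g j) \<longleftrightarrow> (\<forall>j\<le>n. (\<Sum>i\<le>j. f i) = (\<Sum>i\<le>j. g i))"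
proof
  assume sums: "\<forall>j\<le>n. (\<Sum>i\<le>j. f i) = (\<Sum>i\<le>j. g i)"
  show "\<forall>j\<le>n. f j = g j"
  proof (intro allI impI)
    fix j assume "j \<le> n"
    then show "f j = g j"
    proof (cases j)
      case (Suc m)
      then show ?thesis
        using \<open>j \<le> n\<close> sums[rule_format, of j] sums[rule_format, of m] by simp
    qed (use sums in auto)
  qed
qed auto

lemma summable_interval_sums_le:
  fixes f :: "nat \<Rightarrow> real"
  assumes "summable f" and "\<And>i. 0 \<le> f i" and "0 < \<epsilon>"
  obtains M where "\<And>k. (\<Sum>i\<in>{M..<k}. f i) \<le> \<epsilon>"
proof -
  obtain M where M: "norm (\<Sum>i. f (i + M)) < \<epsilon>"
    using suminf_exist_split[OF assms(3,1)] by blast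
  have "(\<Sum>i\<in>{M..<k}. f i) \<le> \<epsilon>" for k
  proof -
    have "(\<Sum>i\<in>{M..<k}. f i) = (\<Sum>i<k - M. f (i + M))"
      by (simp add: sum.atLeastLessThan_shift_0 atLeast0LessThan add.commute)
    also have "\<dots> \<le> (\<Sum>i. f (i + M))"
      using assms(1,2) by (intro sum_le_suminf summable_ignore_initial_segment) auto
    finally show ?thesis using M by simp
  qed
  then show ?thesis by (rule that)
qed

lemma summable_linear_times_power:
  fixes q :: real
  assumes "0 \<le> q" "q < 1"
  shows "summable (\<lambda>i. (real i + 3) * q ^ Suc i)"
proof -
  have "summable (\<lambda>i. diffs (\<lambda>_. 1) i * q ^ i)"
    using assms by (intro termdiff_converges[of q 1]) (auto intro: summable_geometric)
  then have "summable (\<lambda>i. real (Suc i) * q ^ i)"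
    by (simp add: diffs_def)
  then have "summable (\<lambda>i. q * (real (Suc i) * q ^ i) + 2 * q * q ^ i)"
    using assms by (intro summable_add summable_mult summable_geometric) auto
  then show ?thesis
    by (simp add: algebra_simps)
qed

locale upward_skip_free_chain =
  fixes n :: nat and P :: "nat \<Rightarrow> nat \<Rightarrow> real"
  assumes P_nonneg: "k \<le> n \<Longrightarrow> 0 \<le> P k j"
    and P_row_sum: "k \<le> n \<Longrightarrow> (\<Sum>j\<le>n. P k j) = 1"
    and P_outside: "k \<le> n \<Longrightarrow> n < j \<Longrightarrow> P k j = 0"
    and P_skip_free: "k \<le> n \<Longrightarrow> Suc k < j \<Longrightarrow> P k j = 0"
    and P_up_pos: "k < n \<Longrightarrow> 0 < P k (Suc k)"
begin

definition balanced :: "(nat \<Rightarrow> real) \<Rightarrow> bool" where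
  "balanced \<nu> \<longleftrightarrow> (\<forall>j\<le>n. \<nu> j = (\<Sum>k\<le>n. \<nu> k * P k j))"

definition stationary :: "(nat \<Rightarrow> real) \<Rightarrow> bool" where
  "stationary \<nu> \<longleftrightarrow> (\<forall>j. 0 \<le> \<nu> j) \<and> (\<forall>j>n. \<nu> j = 0) \<and> (\<Sum>j\<le>n. \<nu> j) = 1 \<and> balanced \<nu>"

definition lower_tail :: "nat \<Rightarrow> nat \<Rightarrow> real" where
  "lower_tail k j = (\<Sum>i\<le>j. P k i)"

definition cut_balanced :: "(nat \<Rightarrow> real) \<Rightarrow> bool" where
  "cut_balanced \<nu> \<longleftrightarrow>
     (\<forall>j<n. \<nu> j * P j (Suc j) = (\<Sum>k\<in>{j<..n}. \<nu> k * lower_tail k j))"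

lemma lower_tail_nonneg: "k \<le> n \<Longrightarrow> 0 \<le> lower_tail k j"
  unfolding lower_tail_def by (intro sum_nonneg P_nonneg)

lemma lower_tail_Suc: "lower_tail k (Suc j) = lower_tail k j + P k (Suc j)"
  by (simp add: lower_tail_def)

lemma lower_tail_eq_one:
  assumes "k \<le> n" "k \<le> j"
  shows "lower_tail k (Suc j) = 1"
proof -
  have "lower_tail k (Suc j) = (\<Sum>i\<le>max n (Suc j). P k i)"
    unfolding lower_tail_def using assms
    by (intro sum.mono_neutral_left) (auto simp: P_skip_free)
  also have "\<dots> = (\<Sum>i\<le>n. P k i)"
    using assms by (intro sum.mono_neutral_right) (auto simp: P_outside)
  finally show ?thesis using P_row_sum[OF assms(1)] by simp
qed

lemma lower_tail_eq_one_minus_up: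
  assumes "k \<le> n" "k \<le> j"
  shows "lower_tail k j = 1 - P k (Suc j)"
  using lower_tail_eq_one[OF assms] lower_tail_Suc[of k j] by simp

lemma lower_tail_Suc_below:
  "Suc k \<le> n \<Longrightarrow> lower_tail (Suc k) k = 1 - P (Suc k) (Suc k) - P (Suc k) (Suc (Suc k))"
  using lower_tail_eq_one_minus_up[of "Suc k" "Suc k"] lower_tail_Suc[of "Suc k" k] by simp

lemma sum_lower_tail_split:
  assumes "j < n"
  shows "(\<Sum>k\<le>n. \<nu> k * lower_tail k j)
           = (\<Sum>i\<le>j. \<nu> i) - \<nu> j * P j (Suc j) + (\<Sum>k\<in>{j<..n}. \<nu> k * lower_tail k j)"
proof -
  have "{..n} = {..j} \<union> {j<..n}" using assms by auto
  then have "(\<Sum>k\<le>n. \<nu> k * lower_tail k j)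
               = (\<Sum>k\<le>j. \<nu> k * lower_tail k j) + (\<Sum>k\<in>{j<..n}. \<nu> k * lower_tail k j)"
    by (simp add: sum.union_disjoint ivl_disj_int)
  moreover have "(\<Sum>k\<le>j. \<nu> k * lower_tail k j) = (\<Sum>k\<le>j. \<nu> k - \<nu> k * P k (Suc j))"
    using assms by (intro sum.cong) (auto simp: lower_tail_eq_one_minus_up algebra_simps)
  moreover have "(\<Sum>k\<le>j. \<nu> k * P k (Suc j)) = \<nu> j * P j (Suc j)"
  proof -
    have "(\<Sum>k<j. \<nu> k * P k (Suc j)) = 0"
      using assms by (intro sum.neutral) (auto simp: P_skip_free)
    then show ?thesis by (simp add: lessThan_Suc_atMost[symmetric])
  qed
  ultimately show ?thesis by (simp add: sum_subtractf)
qed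

lemma balanced_iff_cut_balanced: "balanced \<nu> \<longleftrightarrow> cut_balanced \<nu>"
proof -
  define B where "B j = (\<Sum>k\<le>n. \<nu> k * P k j)" for j
  have partial_B: "(\<Sum>i\<le>j. B i) = (\<Sum>k\<le>n. \<nu> k * lower_tail k j)" for j
    unfolding B_def lower_tail_def by (simp add: sum_distrib_left sum.swap[of _ "{..j}"])
  have total: "(\<Sum>i\<le>n. \<nu> i) = (\<Sum>i\<le>n. B i)"
    unfolding partial_B by (intro sum.cong) (auto simp: lower_tail_def P_row_sum)
  have "balanced \<nu> \<longleftrightarrow> (\<forall>j\<le>n. (\<Sum>i\<le>j. \<nu> i) = (\<Sum>i\<le>j. B i))"
    unfolding balanced_def B_def[symmetric] by (rule eq_on_atMost_iff_partial_sums_eq)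
  also have "\<dots> \<longleftrightarrow> (\<forall>j<n. (\<Sum>i\<le>j. \<nu> i) = (\<Sum>i\<le>j. B i))"
    using total by (auto simp: le_less)
  also have "\<dots> \<longleftrightarrow> cut_balanced \<nu>"
    unfolding cut_balanced_def partial_B by (auto simp: sum_lower_tail_split)
  finally show ?thesis .
qed

function cut_solution :: "nat \<Rightarrow> real" where
  "cut_solution j =
     (if n < j then 0 else if j = n then 1
      else (\<Sum>k\<in>{j<..n}. cut_solution k * lower_tail k j) / P j (Suc j))"
  by auto
termination by (relation "measure (\<lambda>j. n - j)") auto

declare cut_solution.simps [simp del]

lemma cut_solution_nonneg: "0 \<le> cut_solution j"
proof (induction "n - j" arbitrary: j rule: less_induct)
  case less
  have "0 \<le> (\<Sum>k\<in>{j<..n}. cut_solution k * lower_tail k j) / P j (Suc j)" if "j < n"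
    using less that P_up_pos[OF that]
    by (intro divide_nonneg_pos sum_nonneg mult_nonneg_nonneg lower_tail_nonneg) auto
  then show ?case by (subst cut_solution.simps) simp
qed

lemma cut_solution_top: "cut_solution n = 1"
  by (subst cut_solution.simps) simp

lemma cut_solution_outside: "n < j \<Longrightarrow> cut_solution j = 0"
  by (subst cut_solution.simps) simp

lemma cut_balanced_cut_solution: "cut_balanced cut_solution"
  unfolding cut_balanced_def
proof (intro allI impI)
  fix j assume "j < n"
  then show "cut_solution j * P j (Suc j) = (\<Sum>k\<in>{j<..n}. cut_solution k * lower_tail k j)"
    using P_up_pos[of j] by (subst cut_solution.simps) simp
qed

lemma cut_balanced_eq_scaled_cut_solution:
  assumes "cut_balanced \<nu>" "j \<le> n"
  shows "\<nu> j = \<nu> n * cut_solution j"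
  using assms(2)
proof (induction "n - j" arbitrary: j rule: less_induct)
  case less
  show ?case
  proof (cases "j = n")
    case True
    then show ?thesis by (simp add: cut_solution_top)
  next
    case False
    then have "j < n" using less.prems by simp
    have "\<nu> j * P j (Suc j) = (\<Sum>k\<in>{j<..n}. \<nu> k * lower_tail k j)"
      using assms(1) \<open>j < n\<close> unfolding cut_balanced_def by blast
    also have "\<dots> = (\<Sum>k\<in>{j<..n}. \<nu> n * cut_solution k * lower_tail k j)"
    proof (rule sum.cong)
      fix k assume "k \<in> {j<..n}"
      then have "\<nu> k = \<nu> n * cut_solution k" by (intro less.hyps) auto
      then show "\<nu> k * lower_tail k j = \<nu> n * cut_solution k * lower_tail k j" by simp
    qed simp
    also have "\<dots> = \<nu> n * (\<Sum>k\<in>{j<..n}. cut_solution k * lower_tail k j)"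
      by (simp add: sum_distrib_left mult.assoc)
    finally show ?thesis
      using P_up_pos[OF \<open>j < n\<close>] \<open>j < n\<close> by (subst cut_solution.simps) (simp add: field_simps)
  qed
qed

definition stationary_law :: "nat \<Rightarrow> real" where
  "stationary_law j = cut_solution j / (\<Sum>i\<le>n. cut_solution i)"

lemma sum_cut_solution_pos: "0 < (\<Sum>i\<le>n. cut_solution i)"
proof -
  have "cut_solution n \<le> (\<Sum>i\<le>n. cut_solution i)"
    using cut_solution_nonneg by (intro member_le_sum) auto
  then show ?thesis by (simp add: cut_solution_top)
qed

lemma stationary_stationary_law: "stationary stationary_law"
proof -
  have "balanced cut_solution"
    using cut_balanced_cut_solution balanced_iff_cut_balanced by blast
  then have "balanced stationary_law"
    unfolding balanced_def stationary_law_def by (simp add: sum_divide_distrib[symmetric])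
  moreover have "(\<Sum>j\<le>n. stationary_law j) = 1"
    using sum_cut_solution_pos by (simp add: stationary_law_def sum_divide_distrib[symmetric])
  ultimately show ?thesis
    unfolding stationary_def using cut_solution_nonneg sum_cut_solution_pos
    by (auto simp: stationary_law_def cut_solution_outside)
qed

lemma stationary_iff: "stationary \<nu> \<longleftrightarrow> \<nu> = stationary_law"
proof
  assume stat: "stationary \<nu>"
  then have "cut_balanced \<nu>"
    unfolding stationary_def balanced_iff_cut_balanced by blast
  then have scaled: "\<nu> j = \<nu> n * cut_solution j" if "j \<le> n" for j
    using that by (rule cut_balanced_eq_scaled_cut_solution)
  have "1 = (\<Sum>i\<le>n. \<nu> i)"
    using stat unfolding stationary_def by simp
  also have "\<dots> = \<nu> n * (\<Sum>i\<le>n. cut_solution i)"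
    unfolding sum_distrib_left by (intro sum.cong refl scaled) simp
  finally have top: "\<nu> n = 1 / (\<Sum>i\<le>n. cut_solution i)"
    using sum_cut_solution_pos by (simp add: field_simps)
  show "\<nu> = stationary_law"
  proof
    fix j
    show "\<nu> j = stationary_law j"
    proof (cases "j \<le> n")
      case True
      then show ?thesis using scaled[OF True] top by (simp add: stationary_law_def)
    next
      case False
      then show ?thesis
        using stat by (simp add: stationary_def stationary_law_def cut_solution_outside)
    qed
  qed
qed (use stationary_stationary_law in simp)

lemma stationary_nonneg: "stationary \<nu> \<Longrightarrow> 0 \<le> \<nu> j"
  by (simp add: stationary_def)

lemma stationary_le_one:
  assumes "stationary \<nu>"
  shows "\<nu> j \<le> 1"
proof (cases "j \<le> n")
  case True
  then have "\<nu> j \<le> (\<Sum>i\<le>n. \<nu> i)"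
    using assms by (intro member_le_sum stationary_nonneg) auto
  then show ?thesis using assms by (simp add: stationary_def)
qed (use assms in \<open>simp add: stationary_def\<close>)

lemma stationary_up_step:
  assumes "stationary \<nu>" "k < n"
  shows "\<nu> k * P k (Suc k) \<le> \<nu> (Suc k)"
proof -
  have "\<nu> k * P k (Suc k) \<le> (\<Sum>i\<le>n. \<nu> i * P i (Suc k))"
    using assms by (intro member_le_sum mult_nonneg_nonneg P_nonneg) (auto simp: stationary_def)
  also have "\<dots> = \<nu> (Suc k)"
    using assms unfolding stationary_def balanced_def by simp
  finally show ?thesis .
qed

lemma stationary_ge_prod_up:
  assumes "stationary \<nu>" "k \<le> n"
  shows "\<nu> 0 * (\<Prod>i<k. P i (Suc i)) \<le> \<nu> k"
  using assms(2)
proof (induction k)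
  case (Suc k)
  have "\<nu> 0 * (\<Prod>i<Suc k. P i (Suc i)) = (\<nu> 0 * (\<Prod>i<k. P i (Suc i))) * P k (Suc k)"
    by (simp add: mult.assoc)
  also have "\<dots> \<le> \<nu> k * P k (Suc k)"
    using Suc by (intro mult_right_mono P_nonneg) auto
  also have "\<dots> \<le> \<nu> (Suc k)"
    using assms(1) Suc.prems by (intro stationary_up_step) auto
  finally show ?case .
qed simp

lemma stationary_down_step:
  assumes "stationary \<nu>" "k < n"
  shows "\<nu> (Suc k) * lower_tail (Suc k) k \<le> \<nu> k * P k (Suc k)"
proof -
  have "cut_balanced \<nu>"
    using assms(1) unfolding stationary_def balanced_iff_cut_balanced by blast
  then have flow: "\<nu> k * P k (Suc k) = (\<Sum>i\<in>{k<..n}. \<nu> i * lower_tail i k)"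
    using assms(2) unfolding cut_balanced_def by blast
  show ?thesis
    unfolding flow using assms
    by (intro member_le_sum mult_nonneg_nonneg lower_tail_nonneg) (auto simp: stationary_def)
qed

lemma stationary_le_prod_up:
  assumes "stationary \<nu>" "M \<le> k" "k \<le> n"
  shows "\<nu> k * (\<Prod>i\<in>{M..<k}. lower_tail (Suc i) i) \<le> \<nu> M * (\<Prod>i\<in>{M..<k}. P i (Suc i))"
  using assms(2,3)
proof (induction k rule: dec_induct)
  case (step k)
  have "\<nu> (Suc k) * (\<Prod>i\<in>{M..<Suc k}. lower_tail (Suc i) i)
          = (\<nu> (Suc k) * lower_tail (Suc k) k) * (\<Prod>i\<in>{M..<k}. lower_tail (Suc i) i)"
    using step.hyps by (simp add: prod.atLeastLessThan_Suc ac_simps)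
  also have "\<dots> \<le> (\<nu> k * P k (Suc k)) * (\<Prod>i\<in>{M..<k}. lower_tail (Suc i) i)"
    using assms(1) step
    by (intro mult_right_mono stationary_down_step prod_nonneg lower_tail_nonneg) auto
  also have "\<dots> = (\<nu> k * (\<Prod>i\<in>{M..<k}. lower_tail (Suc i) i)) * P k (Suc k)"
    by (simp add: ac_simps)
  also have "\<dots> \<le> (\<nu> M * (\<Prod>i\<in>{M..<k}. P i (Suc i))) * P k (Suc k)"
    using step by (intro mult_right_mono P_nonneg) auto
  also have "\<dots> = \<nu> M * (\<Prod>i\<in>{M..<Suc k}. P i (Suc i))"
    using step.hyps by (simp add: prod.atLeastLessThan_Suc ac_simps)
  finally show ?case .
qed simp

lemma stationary_ge_return_to_zero:
  assumes "stationary \<nu>" "L \<le> n"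
  shows "(\<Sum>j\<le>L. \<nu> j * P j 0) \<le> \<nu> 0"
proof -
  have "(\<Sum>j\<le>L. \<nu> j * P j 0) \<le> (\<Sum>j\<le>n. \<nu> j * P j 0)"
    using assms by (intro sum_mono2 mult_nonneg_nonneg P_nonneg) (auto simp: stationary_def)
  also have "\<dots> = \<nu> 0"
    using assms(1) unfolding stationary_def balanced_def by simp
  finally show ?thesis .
qed

end

lemma binom_pmf_eq_0: "m < j \<Longrightarrow> binom_pmf m x j = 0"
  by (simp add: binom_pmf_def)

lemma binom_pmf_nonneg: "0 \<le> x \<Longrightarrow> x \<le> 1 \<Longrightarrow> 0 \<le> binom_pmf m x j"
  by (simp add: binom_pmf_def)

lemma sum_binom_pmf:
  assumes "m \<le> M"
  shows "(\<Sum>j\<le>M. binom_pmf m x j) = 1"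
proof -
  have "(\<Sum>j\<le>M. binom_pmf m x j) = (\<Sum>j\<le>m. binom_pmf m x j)"
    using assms by (intro sum.mono_neutral_right) (auto simp: binom_pmf_eq_0)
  also have "\<dots> = (x + (1 - x)) ^ m"
    unfolding binomial_ring binom_pmf_def by simp
  finally show ?thesis by simp
qed

lemma careless_P_up: "careless_P p n k (Suc k) = real (n - k) / real n * (1 - p) ^ Suc k"
  by (simp add: careless_P_def binom_pmf_def)

lemma triangular_number_Suc: "Suc k * (Suc k + 1) div 2 = k * (k + 1) div 2 + Suc k"
proof -
  have "Suc k * (Suc k + 1) = k * (k + 1) + 2 * Suc k" by (simp add: algebra_simps)
  then show ?thesis by simp
qed

lemma careless_w_Suc:
  assumes "0 < n"
  shows "careless_w p n (Suc k) = careless_w p n k * careless_P p n k (Suc k)"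
  unfolding careless_w_def careless_P_up triangular_number_Suc using assms
  by (simp add: power_add field_simps)

lemma careless_w_diag: "careless_w p n n = fact n / real n ^ n * (1 - p) ^ (n * (n + 1) div 2)"
proof -
  have "(\<Prod>i<n. real (n - i)) = real (\<Prod>i = 0..<n. n - i)"
    by (simp add: atLeast0LessThan)
  then show ?thesis unfolding careless_w_def fact_prod_rev[of n] by simp
qed

lemma careless_w_ge:
  assumes "2 * k \<le> n" "0 < n" "p < 1"
  shows "(1 / 2) ^ k * (1 - p) ^ (k * (k + 1) div 2) \<le> careless_w p n k"
proof -
  have "(real n / 2) ^ k = (\<Prod>i<k. real n / 2)" by simp
  also have "\<dots> \<le> (\<Prod>i<k. real (n - i))"
    using assms by (intro prod_mono) (auto simp: of_nat_diff)
  finally have "(real n / 2) ^ k / real n ^ k \<le> (\<Prod>i<k. real (n - i)) / real n ^ k"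
    using assms by (intro divide_right_mono) auto
  moreover have "(real n / 2) ^ k / real n ^ k = (1 / 2) ^ k"
    using assms by (simp add: power_divide)
  ultimately show ?thesis
    unfolding careless_w_def using assms by (intro mult_right_mono) auto
qed

locale careless_chain =
  fixes p :: real and n :: nat
  assumes n_pos: "0 < n" and p_pos: "0 < p" and p_less_1: "p < 1"

sublocale careless_chain \<subseteq> upward_skip_free_chain n "careless_P p n"
proof
  fix k j assume k: "k \<le> n"
  show "0 \<le> careless_P p n k j"
    unfolding careless_P_def using k p_pos p_less_1
    by (intro add_nonneg_nonneg mult_nonneg_nonneg binom_pmf_nonneg) auto
  show "(\<Sum>j\<le>n. careless_P p n k j) = 1"
  proof (cases "k = n")
    case True
    then show ?thesis using n_pos by (simp add: careless_P_def sum_binom_pmf)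
  next
    case False
    have "(\<Sum>j\<le>n. careless_P p n k j)
            = real k / real n * (\<Sum>j\<le>n. binom_pmf k (1 - p) j)
              + real (n - k) / real n * (\<Sum>j\<le>n. binom_pmf (Suc k) (1 - p) j)"
      unfolding careless_P_def by (simp add: sum.distrib sum_distrib_left)
    also have "\<dots> = real k / real n + real (n - k) / real n"
      using k False by (simp add: sum_binom_pmf)
    also have "\<dots> = 1"
      using k n_pos by (simp add: of_nat_diff field_simps)
    finally show ?thesis .
  qed
  show "careless_P p n k j = 0" if "n < j"
    using k that by (cases "k = n") (auto simp: careless_P_def binom_pmf_eq_0)
  show "careless_P p n k j = 0" if "Suc k < j"
    using that by (simp add: careless_P_def binom_pmf_eq_0)
next
  fix k assume "k < n"
  then show "0 < careless_P p n k (Suc k)"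
    using p_less_1 by (simp add: careless_P_up)
qed

context careless_chain
begin

lemma careless_nu_eq_stationary_law: "careless_nu p n = stationary_law"
proof -
  have "careless_stationary p n = stationary"
    by (simp add: fun_eq_iff careless_stationary_def stationary_def balanced_def)
  then show ?thesis
    unfolding careless_nu_def stationary_iff by simp
qed

lemma careless_nu_stationary: "stationary (careless_nu p n)"
  using stationary_stationary_law by (simp add: careless_nu_eq_stationary_law)

lemma careless_w_eq_prod_up: "careless_w p n k = (\<Prod>i<k. careless_P p n i (Suc i))"
proof (induction k)
  case 0
  show ?case by (simp add: careless_w_def)
next
  case (Suc k)
  then show ?case by (simp add: careless_w_Suc[OF n_pos])
qed

lemma careless_w_pos: "k \<le> n \<Longrightarrow> 0 < careless_w p n k"
  unfolding careless_w_eq_prod_up by (intro prod_pos P_up_pos) auto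

lemma careless_w_le: "careless_w p n k \<le> (1 - p) ^ k"
proof -
  have "careless_P p n i (Suc i) \<le> 1 - p" for i
  proof -
    have "real (n - i) / real n * (1 - p) ^ Suc i \<le> (1 - p) ^ Suc i"
      using p_less_1 by (intro mult_left_le_one_le) (auto simp: divide_le_eq_1 n_pos)
    also have "\<dots> \<le> 1 - p"
      using p_pos p_less_1 by (simp add: power_le_one mult_left_le)
    finally show ?thesis unfolding careless_P_up .
  qed
  then have "(\<Prod>i<k. careless_P p n i (Suc i)) \<le> (\<Prod>i<k. 1 - p)"
    using p_less_1 by (intro prod_mono) (simp add: careless_P_up)
  then show ?thesis
    unfolding careless_w_eq_prod_up by simp
qed

lemma careless_P_to_zero_ge:
  assumes "k \<le> n"
  shows "p ^ Suc k \<le> careless_P p n k 0"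
proof -
  have "p ^ Suc k = real k / real n * p ^ Suc k + real (n - k) / real n * p ^ Suc k"
    using assms n_pos by (simp add: of_nat_diff field_simps)
  also have "\<dots> \<le> real k / real n * p ^ k + real (n - k) / real n * p ^ Suc k"
    using p_pos p_less_1 by (intro add_right_mono mult_left_mono power_decreasing) auto
  also have "\<dots> = careless_P p n k 0"
    by (simp add: careless_P_def binom_pmf_def)
  finally show ?thesis .
qed

lemma careless_P_stay_or_up_le:
  assumes "k \<le> n"
  shows "careless_P p n k k + careless_P p n k (Suc k) \<le> (real k + 2) * (1 - p) ^ k"
proof -
  define a b where "a = real k / real n" and "b = real (n - k) / real n"
  have ab: "0 \<le> a" "0 \<le> b" "a + b = 1"
    using assms n_pos by (auto simp: a_def b_def of_nat_diff field_simps)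
  have q: "0 \<le> (1 - p) ^ k" "(1 - p) ^ Suc k \<le> (1 - p) ^ k"
    using p_pos p_less_1 by (auto intro: power_decreasing)
  have "careless_P p n k k = a * (1 - p) ^ k + b * ((real k + 1) * (1 - p) ^ k * p)"
    by (simp add: careless_P_def binom_pmf_def a_def b_def)
  also have "\<dots> \<le> a * ((real k + 1) * (1 - p) ^ k) + b * ((real k + 1) * (1 - p) ^ k)"
    using ab q p_less_1 by (intro add_mono mult_left_mono) (auto simp: mult_right_le_one_le)
  finally have stay: "careless_P p n k k \<le> (real k + 1) * (1 - p) ^ k"
    using ab by (simp add: distrib_right[symmetric])
  have "careless_P p n k (Suc k) = b * (1 - p) ^ Suc k"
    by (simp add: careless_P_up b_def)
  also have "\<dots> \<le> (1 - p) ^ Suc k"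
    using ab p_less_1 by (intro mult_left_le_one_le) auto
  also have "\<dots> \<le> (1 - p) ^ k"
    using q by simp
  finally show ?thesis
    using stay by (simp add: algebra_simps)
qed

lemma careless_lower_tail_ge:
  assumes "Suc k \<le> n"
  shows "1 - (real k + 3) * (1 - p) ^ Suc k \<le> lower_tail (Suc k) k"
  using careless_P_stay_or_up_le[OF assms] lower_tail_Suc_below[OF assms]
  by (simp add: algebra_simps)

lemma careless_nu_ge_w: "k \<le> n \<Longrightarrow> careless_nu p n 0 * careless_w p n k \<le> careless_nu p n k"
  unfolding careless_w_eq_prod_up using careless_nu_stationary by (rule stationary_ge_prod_up)

lemma careless_nu_le_w:
  assumes small: "\<And>k. (\<Sum>i\<in>{M..<k}. (real i + 3) * (1 - p) ^ Suc i) \<le> 1 / 2"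
    and "M \<le> k" "k \<le> n"
  shows "careless_nu p n k \<le> 2 / careless_w p n M * careless_w p n k"
proof -
  define x where "x i = (real i + 3) * (1 - p) ^ Suc i" for i
  have x_unit: "x i \<in> {0..1}" if "i \<in> {M..<k}" for i
  proof -
    have "x i \<le> (\<Sum>j\<in>{M..<Suc i}. x j)"
      using that p_less_1 by (intro member_le_sum) (auto simp: x_def)
    also have "\<dots> \<le> 1 / 2"
      using small unfolding x_def .
    finally show ?thesis using p_less_1 by (auto simp: x_def)
  qed
  have "1 / 2 \<le> 1 - (\<Sum>i\<in>{M..<k}. x i)"
    using small[of k] by (simp add: x_def)
  also have "\<dots> \<le> (\<Prod>i\<in>{M..<k}. 1 - x i)"
    using x_unit by (rule Weierstrass_prod_ineq)
  also have "\<dots> \<le> (\<Prod>i\<in>{M..<k}. lower_tail (Suc i) i)"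
  proof (rule prod_mono)
    fix i assume i: "i \<in> {M..<k}"
    then have "Suc i \<le> n" using assms(3) by simp
    then show "0 \<le> 1 - x i \<and> 1 - x i \<le> lower_tail (Suc i) i"
      using x_unit[OF i] careless_lower_tail_ge unfolding x_def by auto
  qed
  finally have half: "1 / 2 \<le> (\<Prod>i\<in>{M..<k}. lower_tail (Suc i) i)" .
  have w_split: "careless_w p n k = careless_w p n M * (\<Prod>i\<in>{M..<k}. careless_P p n i (Suc i))"
    unfolding careless_w_eq_prod_up lessThan_atLeast0
    using assms(2) by (simp add: prod.atLeastLessThan_concat)
  have "careless_nu p n k * (1 / 2)
          \<le> careless_nu p n k * (\<Prod>i\<in>{M..<k}. lower_tail (Suc i) i)"
    using half careless_nu_stationary by (intro mult_left_mono stationary_nonneg)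
  also have "\<dots> \<le> careless_nu p n M * (\<Prod>i\<in>{M..<k}. careless_P p n i (Suc i))"
    using careless_nu_stationary assms(2,3) by (rule stationary_le_prod_up)
  also have "\<dots> \<le> (\<Prod>i\<in>{M..<k}. careless_P p n i (Suc i))"
    using careless_nu_stationary assms(2,3)
    by (intro mult_left_le_one_le prod_nonneg P_nonneg stationary_le_one stationary_nonneg) auto
  also have "\<dots> = careless_w p n k / careless_w p n M"
    using careless_w_pos[of M] assms(2,3) by (simp add: w_split)
  finally show ?thesis by (simp add: field_simps)
qed

lemma careless_nu_zero_ge:
  assumes upper: "\<And>k. L < k \<Longrightarrow> k \<le> n \<Longrightarrow> careless_nu p n k \<le> C * careless_w p n k"
    and "L < n" "0 \<le> C" and tail: "C * (1 - p) ^ Suc L \<le> p / 2"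
  shows "p ^ Suc L / 2 \<le> careless_nu p n 0"
proof -
  let ?\<nu> = "careless_nu p n"
  have "(\<Sum>j=Suc L..n. ?\<nu> j) \<le> (\<Sum>j=Suc L..n. C * (1 - p) ^ j)"
  proof (rule sum_mono)
    fix j assume "j \<in> {Suc L..n}"
    then have "?\<nu> j \<le> C * careless_w p n j" by (intro upper) auto
    also have "\<dots> \<le> C * (1 - p) ^ j"
      using careless_w_le \<open>0 \<le> C\<close> by (rule mult_left_mono)
    finally show "?\<nu> j \<le> C * (1 - p) ^ j" .
  qed
  also have "\<dots> \<le> 1 / 2"
  proof -
    define S where "S = (\<Sum>j=Suc L..n. (1 - p) ^ j)"
    have "p * S = (1 - p) ^ Suc L - (1 - p) ^ Suc n"
      using sum_gp_multiplied[of "Suc L" n "1 - p"] \<open>L < n\<close> by (simp add: S_def)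
    also have "\<dots> \<le> (1 - p) ^ Suc L"
      using p_less_1 by simp
    finally have "C * (p * S) \<le> C * (1 - p) ^ Suc L"
      using \<open>0 \<le> C\<close> by (rule mult_left_mono)
    moreover have "p * (C * S) = C * (p * S)"
      by (simp add: ac_simps)
    ultimately have "p * (C * S) \<le> p * (1 / 2)"
      using tail by linarith
    then have "C * S \<le> 1 / 2"
      using p_pos by (rule mult_left_le_imp_le)
    then show ?thesis
      by (simp add: S_def sum_distrib_left)
  qed
  finally have high: "(\<Sum>j=Suc L..n. ?\<nu> j) \<le> 1 / 2" .
  have "{..n} = {..L} \<union> {Suc L..n}" using \<open>L < n\<close> by auto
  then have "(\<Sum>j\<le>L. ?\<nu> j) + (\<Sum>j=Suc L..n. ?\<nu> j) = 1"
    using careless_nu_stationary unfolding stationary_def by (simp add: sum.union_disjoint)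
  with high have low: "1 / 2 \<le> (\<Sum>j\<le>L. ?\<nu> j)" by simp
  have "p ^ Suc L / 2 \<le> p ^ Suc L * (\<Sum>j\<le>L. ?\<nu> j)"
    using mult_left_mono[OF low, of "p ^ Suc L"] p_pos by simp
  also have "\<dots> \<le> (\<Sum>j\<le>L. ?\<nu> j * careless_P p n j 0)"
    unfolding sum_distrib_left
  proof (rule sum_mono)
    fix j assume "j \<in> {..L}"
    then have "p ^ Suc L \<le> p ^ Suc j"
      using p_pos p_less_1 by (intro power_decreasing) auto
    also have "\<dots> \<le> careless_P p n j 0"
      using \<open>j \<in> {..L}\<close> \<open>L < n\<close> by (intro careless_P_to_zero_ge) auto
    finally show "p ^ Suc L * ?\<nu> j \<le> ?\<nu> j * careless_P p n j 0"
      using careless_nu_stationary by (simp add: mult.commute mult_left_mono stationary_nonneg)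
  qed
  also have "\<dots> \<le> ?\<nu> 0"
    using careless_nu_stationary \<open>L < n\<close> by (intro stationary_ge_return_to_zero) auto
  finally show ?thesis .
qed

end

lemma careless_nu_upper_bound:
  assumes "0 < p" "p < 1"
  obtains C M where "0 < C"
    and "\<And>n k. 0 < n \<Longrightarrow> 2 * M \<le> n \<Longrightarrow> M \<le> k \<Longrightarrow> k \<le> n \<Longrightarrow>
           careless_nu p n k \<le> C * careless_w p n k"
proof -
  have "summable (\<lambda>i. (real i + 3) * (1 - p) ^ Suc i)"
    using assms by (intro summable_linear_times_power) auto
  then obtain M where small: "\<And>k. (\<Sum>i\<in>{M..<k}. (real i + 3) * (1 - p) ^ Suc i) \<le> 1 / 2"
    by (rule summable_interval_sums_le[where \<epsilon> = "1 / 2"]) (use assms in auto)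
  define W where "W = (1 / 2) ^ M * (1 - p) ^ (M * (M + 1) div 2)"
  have "0 < W"
    using assms by (simp add: W_def)
  show ?thesis
  proof (rule that[of "2 / W" M])
    fix n k assume n: "0 < n" "2 * M \<le> n" and k: "M \<le> k" "k \<le> n"
    interpret careless_chain p n
      using n(1) assms by (rule careless_chain.intro)
    have "careless_nu p n k \<le> 2 / careless_w p n M * careless_w p n k"
      using small k by (rule careless_nu_le_w)
    also have "\<dots> \<le> 2 / W * careless_w p n k"
    proof (rule mult_right_mono)
      have "W \<le> careless_w p n M"
        using careless_w_ge[OF n(2,1) assms(2)] by (simp add: W_def)
      then show "2 / careless_w p n M \<le> 2 / W"
        using \<open>0 < W\<close> by (intro divide_left_mono) auto
      show "0 \<le> careless_w p n k"
        using careless_w_pos k by (simp add: less_imp_le)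
    qed
    finally show "careless_nu p n k \<le> 2 / W * careless_w p n k" .
  qed (use \<open>0 < W\<close> in simp)
qed

lemma careless_nu_zero_lower_bound:
  assumes "0 < p" "p < 1"
  obtains c N where "0 < c" and "\<And>n. N \<le> n \<Longrightarrow> c \<le> careless_nu p n 0"
proof -
  obtain C M where "0 < C"
    and upper: "\<And>n k. 0 < n \<Longrightarrow> 2 * M \<le> n \<Longrightarrow> M \<le> k \<Longrightarrow> k \<le> n \<Longrightarrow>
                  careless_nu p n k \<le> C * careless_w p n k"
    using careless_nu_upper_bound assms by blast
  have "(\<lambda>j. C * (1 - p) ^ j) \<longlonglongrightarrow> 0"
    using assms by (intro tendsto_mult_right_zero LIMSEQ_power_zero) auto
  then have "eventually (\<lambda>j. C * (1 - p) ^ j < p / 2) sequentially"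
    using assms by (intro order_tendstoD) auto
  then obtain L0 where L0: "\<And>j. L0 \<le> j \<Longrightarrow> C * (1 - p) ^ j < p / 2"
    unfolding eventually_sequentially by blast
  define L where "L = max M L0"
  have "M \<le> L" and tail: "C * (1 - p) ^ Suc L \<le> p / 2"
    using L0[of "Suc L"] by (simp_all add: L_def le_SucI less_imp_le del: power_Suc)
  show ?thesis
  proof (rule that[of "p ^ Suc L / 2" "2 * M + Suc L"])
    fix n assume n: "2 * M + Suc L \<le> n"
    interpret careless_chain p n
      using n assms by (intro careless_chain.intro) auto
    show "p ^ Suc L / 2 \<le> careless_nu p n 0"
      using n \<open>M \<le> L\<close> \<open>0 < C\<close> tail
      by (intro careless_nu_zero_ge[of L C] upper) auto
  qed (use assms in simp)
qed

lemma careless_nu_two_sided_bound: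
  assumes "0 < p" "p < 1"
  obtains c C N M where "0 < c" "c < C"
    and "\<And>n k. N \<le> n \<Longrightarrow> M \<le> k \<Longrightarrow> k \<le> n \<Longrightarrow>
           c * careless_w p n k \<le> careless_nu p n k \<and> careless_nu p n k \<le> C * careless_w p n k"
proof -
  obtain C M where "0 < C"
    and upper: "\<And>n k. 0 < n \<Longrightarrow> 2 * M \<le> n \<Longrightarrow> M \<le> k \<Longrightarrow> k \<le> n \<Longrightarrow>
                  careless_nu p n k \<le> C * careless_w p n k"
    using careless_nu_upper_bound assms by blast
  obtain c N where "0 < c" and zero: "\<And>n. N \<le> n \<Longrightarrow> c \<le> careless_nu p n 0"
    using careless_nu_zero_lower_bound assms by blast
  show ?thesis
  proof (rule that[of c "C + c" "N + 2 * M + 1" M])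
    fix n k assume n: "N + 2 * M + 1 \<le> n" and k: "M \<le> k" "k \<le> n"
    interpret careless_chain p n
      using n assms by (intro careless_chain.intro) auto
    have "c * careless_w p n k \<le> careless_nu p n 0 * careless_w p n k"
      using zero n k careless_w_pos by (intro mult_right_mono) (auto simp: less_imp_le)
    also have "\<dots> \<le> careless_nu p n k"
      using k by (intro careless_nu_ge_w)
    finally have "c * careless_w p n k \<le> careless_nu p n k" .
    moreover have "careless_nu p n k \<le> C * careless_w p n k"
      using n k by (intro upper) auto
    moreover have "0 \<le> c * careless_w p n k"
      using \<open>0 < c\<close> careless_w_pos k by (simp add: less_imp_le)
    ultimately show "c * careless_w p n k \<le> careless_nu p n k \<and>
                     careless_nu p n k \<le> (C + c) * careless_w p n k"
      by (simp add: distrib_right)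
  qed (use \<open>0 < c\<close> \<open>0 < C\<close> in simp_all)
qed

theorem mainTheorem10:
  fixes p :: real
  assumes "0 < p" and "p < 1"
  shows "(\<exists>c C :: real. \<exists>M :: nat. 0 < c \<and> c < C \<and>
            (\<exists>N. \<forall>n\<ge>N. \<forall>k. M \<le> k \<and> k \<le> n \<longrightarrow>
               c * careless_w p n k \<le> careless_nu p n k \<and>
               careless_nu p n k \<le> C * careless_w p n k))
       \<and> (\<exists>c C :: real. 0 < c \<and> 0 < C \<and>
            (\<exists>N. \<forall>n\<ge>N.
               c * (fact n / real n ^ n * (1 - p) ^ (n * (n + 1) div 2)) \<le> careless_nu p n n \<and>
               careless_nu p n n \<le> C * (fact n / real n ^ n * (1 - p) ^ (n * (n + 1) div 2))))"
proof -
  obtain c C N M where "0 < c" "c < C"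
    and bounds: "\<And>n k. N \<le> n \<Longrightarrow> M \<le> k \<Longrightarrow> k \<le> n \<Longrightarrow>
                   c * careless_w p n k \<le> careless_nu p n k \<and> careless_nu p n k \<le> C * careless_w p n k"
    using careless_nu_two_sided_bound assms by blast
  have "0 < C"
    using \<open>0 < c\<close> \<open>c < C\<close> by simp
  have part1: "\<exists>N. \<forall>n\<ge>N. \<forall>k. M \<le> k \<and> k \<le> n \<longrightarrow>
                 c * careless_w p n k \<le> careless_nu p n k \<and> careless_nu p n k \<le> C * careless_w p n k"
    using bounds by blast
  have part2: "\<exists>N. \<forall>n\<ge>N. c * careless_w p n n \<le> careless_nu p n n \<and>
                 careless_nu p n n \<le> C * careless_w p n n"
    using bounds by (intro exI[of _ "max N M"]) simp
  show ?thesis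
    using part1 part2[unfolded careless_w_diag] \<open>0 < c\<close> \<open>c < C\<close> \<open>0 < C\<close>
    by blast
qed

end
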